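(* Let $(X,\Sigma,\mu,T)$ be an ergodic measure theoretic dynamical system. Then for any $A,B\in\Sigma$ and $\varepsilon>0$, the set $$F=\left\{k\in\mathbb{N}:\mu\left(A\cap T^{-k}(B)\right)>\mu(A)\mu(B)-\varepsilon\right\}$$ is relatively dense in $\mathbb{N}=\{1,2,3,\dots\}$.
   Context: A measure theoretic dynamical system $(X,\Sigma,\mu,T)$ consists of a probability space $(X,\Sigma,\mu)$ and a map $T:X\to X$ such that $T^{-1}(S)\in\Sigma$ and $\mu(T^{-1}(S))\le\mu(S)$ for all $S\in\Sigma$. It is called ergodic if the fixed points of the linear operator $U:L^2(\mu)\to L^2(\mu)$, $f\mapsto f\circ T$, form a one-dimensional subspace of $L^2(\mu)$. A set $E\subseteq\mathbb{N}$ is relatively dense in $\mathbb{N}$ if there exists $n\in\mathbb{N}$ such that $E\cap\{j,j+1,\dots,j+n-1\}\neq\emptyset$ for every $j\in\mathbb{N}$. *)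

theory Defs
  imports "HOL-Probability.Probability"
begin

definition mtds :: "'a measure \<Rightarrow> ('a \<Rightarrow> 'a) \<Rightarrow> bool" where
  "mtds M T \<longleftrightarrow> prob_space M \<and> T \<in> M \<rightarrow>\<^sub>M M \<and>
     (\<forall>S\<in>sets M. measure M (T -` S \<inter> space M) \<le> measure M S)"

definition L2 :: "'a measure \<Rightarrow> ('a \<Rightarrow> complex) set" where
  "L2 M = {f. f \<in> borel_measurable M \<and> integrable M (\<lambda>x. (norm (f x))\<^sup>2)}"

text \<open>f is a fixed point of U : f \<mapsto> f \<circ> T in L^2(mu), i.e. f \<circ> T = f as elements of L^2.\<close>
definition U_fixed :: "'a measure \<Rightarrow> ('a \<Rightarrow> 'a) \<Rightarrow> ('a \<Rightarrow> complex) \<Rightarrow> bool" where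
  "U_fixed M T f \<longleftrightarrow> f \<in> L2 M \<and> (AE x in M. f (T x) = f x)"

text \<open>Ergodic: the fixed points of U form a one-dimensional subspace of L^2(mu)
  (elements of L^2 being a.e.-equivalence classes).\<close>
definition ergodic :: "'a measure \<Rightarrow> ('a \<Rightarrow> 'a) \<Rightarrow> bool" where
  "ergodic M T \<longleftrightarrow> mtds M T \<and>
     (\<exists>g. U_fixed M T g \<and> \<not> (AE x in M. g x = 0) \<and>
        (\<forall>f. U_fixed M T f \<longrightarrow> (\<exists>c. AE x in M. f x = c * g x)))"

definition rel_dense_nat :: "nat set \<Rightarrow> bool" where
  "rel_dense_nat E \<longleftrightarrow> (\<exists>n::nat. n \<ge> 1 \<and> (\<forall>j\<ge>1. E \<inter> {j..j+n-1} \<noteq> {}))"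

end

theory Submission
  imports Defs
begin

(*
  Ergodicity yields Birkhoff's ergodic theorem for bounded functions, proved from the maximal
  ergodic lemma: if g has negative integral, the set where the Birkhoff sums of g stay bounded
  above is T-invariant, hence null or conull, and it cannot be null because then the maximal
  lemma would force the integral of g to be nonnegative. Applied to g shifted by small
  constants, this makes the averages S_N/N of the indicator of B converge to mu(B) almost
  everywhere, hence in L^1 by dominated convergence. As T preserves mu, for every j the sum
  over i < N of mu(A \<inter> T^-(j+i) B) is N times the integral over A of (S_N/N) o T^j, which is
  at least N (mu(A) mu(B) - ||S_N/N - mu(B)||_1). Choosing N with that L^1 error below epsilon,
  every window {j, ..., j+N-1} contains a k with mu(A \<inter> T^-k B) > mu(A) mu(B) - epsilon.
*)

lemma mtds_measure_preimage_eq: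
  assumes "mtds M T" "S \<in> sets M"
  shows "measure M (T -` S \<inter> space M) = measure M S"
proof -
  interpret prob_space M using assms(1) by (simp add: mtds_def)
  have T: "T \<in> M \<rightarrow>\<^sub>M M" and le: "\<And>S. S \<in> sets M \<Longrightarrow> measure M (T -` S \<inter> space M) \<le> measure M S"
    using assms(1) by (auto simp: mtds_def)
  have "T -` (space M - S) \<inter> space M = space M - (T -` S \<inter> space M)"
    using measurable_space[OF T] by auto
  then have "1 - measure M (T -` S \<inter> space M) \<le> 1 - measure M S"
    using le[of "space M - S"] assms(2) measurable_sets[OF T assms(2)] by (simp add: prob_compl)
  with le[OF assms(2)] show ?thesis by linarith
qed

lemma mtds_distr_eq:
  assumes "mtds M T"
  shows "distr M M T = M"
proof (rule measure_eqI)
  interpret prob_space M using assms by (simp add: mtds_def)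
  have T: "T \<in> M \<rightarrow>\<^sub>M M" using assms by (simp add: mtds_def)
  fix S assume "S \<in> sets (distr M M T)"
  then have S: "S \<in> sets M" by simp
  show "emeasure (distr M M T) S = emeasure M S"
    using mtds_measure_preimage_eq[OF assms S] measurable_sets[OF T S] S T
    by (simp add: emeasure_distr emeasure_eq_measure)
qed simp

lemma measurable_funpow:
  assumes "T \<in> M \<rightarrow>\<^sub>M M"
  shows "T ^^ n \<in> M \<rightarrow>\<^sub>M M"
  by (induction n) (auto intro: measurable_compose[OF _ assms])

lemma distr_funpow_eq:
  assumes "T \<in> M \<rightarrow>\<^sub>M M" "distr M M T = M"
  shows "distr M M (T ^^ n) = M"
proof (induction n)
  case (Suc n)
  have "distr M M (T ^^ Suc n) = distr (distr M M (T ^^ n)) M T"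
    using distr_distr[OF assms(1) measurable_funpow[OF assms(1)]] by simp
  also have "\<dots> = M"
    using Suc assms(2) by simp
  finally show ?case .
qed (simp add: distr_id2)

lemma integral_funpow_eq:
  fixes h :: "'a \<Rightarrow> real"
  assumes "T \<in> M \<rightarrow>\<^sub>M M" "distr M M T = M" "h \<in> borel_measurable M"
  shows "(\<integral>x. h ((T ^^ n) x) \<partial>M) = integral\<^sup>L M h"
  using integral_distr[OF measurable_funpow[OF assms(1)] assms(3), of n]
  by (simp add: distr_funpow_eq[OF assms(1,2)])

lemma ergodic_invariant_set_trivial:
  assumes "ergodic M T" "D \<in> sets M" "\<And>x. x \<in> space M \<Longrightarrow> T x \<in> D \<longleftrightarrow> x \<in> D"
  shows "(AE x in M. x \<in> D) \<or> (AE x in M. x \<notin> D)"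
proof -
  interpret prob_space M using assms(1) by (simp add: ergodic_def mtds_def)
  obtain g where g: "\<And>f. U_fixed M T f \<Longrightarrow> \<exists>c. AE x in M. f x = c * g x"
    using assms(1) unfolding ergodic_def by blast
  have "U_fixed M T (\<lambda>x. 1)" unfolding U_fixed_def L2_def by auto
  then obtain c1 where c1: "AE x in M. 1 = c1 * g x" using g by blast
  then have "c1 \<noteq> 0"
    using AE_False by fastforce
  have "U_fixed M T (\<lambda>x. complex_of_real (indicator D x))"
    unfolding U_fixed_def L2_def
  proof (intro conjI CollectI)
    show "(\<lambda>x. complex_of_real (indicator D x)) \<in> borel_measurable M" using assms(2) by measurable
    show "integrable M (\<lambda>x. (cmod (complex_of_real (indicator D x)))\<^sup>2)"
      using assms(2) by (intro integrable_const_bound[where B=1]) (auto simp: indicator_def)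
    show "AE x in M. complex_of_real (indicator D (T x)) = complex_of_real (indicator D x)"
      using assms(3) by (auto simp: indicator_def)
  qed
  then obtain c2 where c2: "AE x in M. complex_of_real (indicator D x) = c2 * g x" using g by blast
  have const: "AE x in M. complex_of_real (indicator D x) = c2 / c1"
    using c1 c2 by eventually_elim (use \<open>c1 \<noteq> 0\<close> in \<open>auto simp: field_simps\<close>)
  show ?thesis
  proof (cases "c2 / c1 = 1")
    case True
    from const have "AE x in M. x \<in> D"
      by eventually_elim (use True in \<open>auto simp: indicator_def split: if_splits\<close>)
    then show ?thesis ..
  next
    case False
    from const have "AE x in M. x \<notin> D"
      by eventually_elim (use False in \<open>auto simp: indicator_def split: if_splits\<close>)
    then show ?thesis ..
  qed
qed

definition birkhoff_sum :: "('a \<Rightarrow> real) \<Rightarrow> ('a \<Rightarrow> 'a) \<Rightarrow> nat \<Rightarrow> 'a \<Rightarrow> real" where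
  "birkhoff_sum g T n x = (\<Sum>k<n. g ((T ^^ k) x))"

lemma birkhoff_sum_0 [simp]: "birkhoff_sum g T 0 x = 0"
  by (simp add: birkhoff_sum_def)

lemma birkhoff_sum_Suc: "birkhoff_sum g T (Suc n) x = g x + birkhoff_sum g T n (T x)"
  unfolding birkhoff_sum_def sum.lessThan_Suc_shift
  by (simp add: funpow_Suc_right del: funpow.simps)

lemma birkhoff_sum_diff_const:
  "birkhoff_sum (\<lambda>x. g x - a) T n x = birkhoff_sum g T n x - real n * a"
  by (simp add: birkhoff_sum_def sum_subtractf)

lemma birkhoff_sum_const_diff:
  "birkhoff_sum (\<lambda>x. a - g x) T n x = real n * a - birkhoff_sum g T n x"
  by (simp add: birkhoff_sum_def sum_subtractf)

lemma measurable_birkhoff_sum [measurable]: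
  assumes "T \<in> M \<rightarrow>\<^sub>M M" "g \<in> borel_measurable M"
  shows "birkhoff_sum g T n \<in> borel_measurable M"
  unfolding birkhoff_sum_def
  by (intro borel_measurable_sum measurable_compose[OF measurable_funpow[OF assms(1)] assms(2)])

lemma birkhoff_sum_abs_le:
  assumes "T \<in> M \<rightarrow>\<^sub>M M" "\<And>x. x \<in> space M \<Longrightarrow> \<bar>g x\<bar> \<le> K" "x \<in> space M"
  shows "\<bar>birkhoff_sum g T n x\<bar> \<le> real n * K"
proof -
  have "\<bar>g ((T ^^ k) x)\<bar> \<le> K" for k
    using assms(2) measurable_space[OF measurable_funpow[OF assms(1)] assms(3)] by blast
  then have "(\<Sum>k<n. \<bar>g ((T ^^ k) x)\<bar>) \<le> real n * K"
    using sum_bounded_above[of "{..<n}" "\<lambda>k. \<bar>g ((T ^^ k) x)\<bar>" K] by simp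
  then show ?thesis
    unfolding birkhoff_sum_def by (rule order_trans[OF sum_abs])
qed

lemma bdd_above_birkhoff_sum_shift_iff:
  "bdd_above (range (\<lambda>n. birkhoff_sum g T n (T x))) \<longleftrightarrow>
   bdd_above (range (\<lambda>n. birkhoff_sum g T n x))"
proof
  assume "bdd_above (range (\<lambda>n. birkhoff_sum g T n (T x)))"
  then obtain B where B: "\<And>n. birkhoff_sum g T n (T x) \<le> B"
    by (auto simp: bdd_above_def)
  have "birkhoff_sum g T n x \<le> max 0 (g x + B)" for n
  proof (cases n)
    case (Suc m)
    then show ?thesis using B[of m] by (simp add: birkhoff_sum_Suc)
  qed simp
  then show "bdd_above (range (\<lambda>n. birkhoff_sum g T n x))"
    by (intro bdd_aboveI2)
next
  assume "bdd_above (range (\<lambda>n. birkhoff_sum g T n x))"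
  then obtain B where "\<And>n. birkhoff_sum g T n x \<le> B"
    by (auto simp: bdd_above_def)
  then have "birkhoff_sum g T n (T x) \<le> B - g x" for n
    using birkhoff_sum_Suc[of g T n x] by (metis add.commute le_diff_eq)
  then show "bdd_above (range (\<lambda>n. birkhoff_sum g T n (T x)))"
    by (intro bdd_aboveI2)
qed

text \<open>\<open>birkhoff_max g T n x\<close> is the running maximum of \<open>birkhoff_sum g T k x\<close> over \<open>k \<le> n\<close>.\<close>
primrec birkhoff_max :: "('a \<Rightarrow> real) \<Rightarrow> ('a \<Rightarrow> 'a) \<Rightarrow> nat \<Rightarrow> 'a \<Rightarrow> real" where
  "birkhoff_max g T 0 x = 0"
| "birkhoff_max g T (Suc n) x = max 0 (g x + birkhoff_max g T n (T x))"

lemma birkhoff_max_nonneg: "0 \<le> birkhoff_max g T n x"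
  by (cases n) auto

lemma birkhoff_sum_le_birkhoff_max: "birkhoff_sum g T n x \<le> birkhoff_max g T n x"
proof (induction n arbitrary: x)
  case (Suc n)
  then have "g x + birkhoff_sum g T n (T x) \<le> g x + birkhoff_max g T n (T x)"
    by (intro add_left_mono)
  then show ?case
    by (simp add: birkhoff_sum_Suc le_max_iff_disj)
qed simp

lemma birkhoff_max_Suc_mono: "birkhoff_max g T n x \<le> birkhoff_max g T (Suc n) x"
proof (induction n arbitrary: x)
  case (Suc n)
  then have "g x + birkhoff_max g T n (T x) \<le> g x + birkhoff_max g T (Suc n) (T x)"
    by (intro add_left_mono)
  then show ?case
    by (metis birkhoff_max.simps(2) max.mono order_refl)
qed simp

lemma birkhoff_max_mono: "m \<le> n \<Longrightarrow> birkhoff_max g T m x \<le> birkhoff_max g T n x"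
  by (rule lift_Suc_mono_le[of "\<lambda>n. birkhoff_max g T n x", OF birkhoff_max_Suc_mono])

lemma measurable_birkhoff_max [measurable]:
  assumes "T \<in> M \<rightarrow>\<^sub>M M" "g \<in> borel_measurable M"
  shows "birkhoff_max g T n \<in> borel_measurable M"
proof (induction n)
  case (Suc n)
  then have "(\<lambda>x. birkhoff_max g T n (T x)) \<in> borel_measurable M"
    using measurable_compose[OF assms(1)] by blast
  with assms(2) show ?case by simp
qed simp

lemma birkhoff_max_le:
  assumes T: "T \<in> M \<rightarrow>\<^sub>M M" and g: "\<And>x. x \<in> space M \<Longrightarrow> \<bar>g x\<bar> \<le> K"
  shows "x \<in> space M \<Longrightarrow> birkhoff_max g T n x \<le> real n * K"
proof (induction n arbitrary: x)
  case (Suc n)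
  have "birkhoff_max g T n (T x) \<le> real n * K"
    using Suc measurable_space[OF T] by blast
  moreover have "\<bar>g x\<bar> \<le> K"
    using g Suc.prems by blast
  ultimately have "g x + birkhoff_max g T n (T x) \<le> real (Suc n) * K"
    by (simp add: distrib_right)
  moreover have "0 \<le> real (Suc n) * K"
    using \<open>\<bar>g x\<bar> \<le> K\<close> by simp
  ultimately show ?case
    by simp
qed simp

lemma birkhoff_max_Suc_diff_le:
  "birkhoff_max g T (Suc n) x - birkhoff_max g T (Suc n) (T x)
    \<le> (if 0 < birkhoff_max g T (Suc n) x then g x else 0)"
proof (cases "0 < birkhoff_max g T (Suc n) x")
  case True
  then have "birkhoff_max g T (Suc n) x = g x + birkhoff_max g T n (T x)"
    by (simp add: max_def split: if_splits)
  with True show ?thesis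
    using birkhoff_max_Suc_mono[of g T n "T x"] by (simp del: birkhoff_max.simps)
next
  case False
  then have "birkhoff_max g T (Suc n) x = 0"
    using birkhoff_max_nonneg[of g T "Suc n" x] by (simp del: birkhoff_max.simps)
  with False show ?thesis
    using birkhoff_max_nonneg[of g T "Suc n" "T x"] by (simp del: birkhoff_max.simps)
qed

text \<open>Garsia's proof: integrate \<open>birkhoff_max_Suc_diff_le\<close>; the left-hand side has integral
  zero because \<open>T\<close> preserves the measure.\<close>
lemma maximal_ergodic_lemma:
  assumes "finite_measure M" "T \<in> M \<rightarrow>\<^sub>M M" "distr M M T = M"
    and "g \<in> borel_measurable M" "\<And>x. x \<in> space M \<Longrightarrow> \<bar>g x\<bar> \<le> K"
  shows "0 \<le> (\<integral>x. indicator {x\<in>space M. 0 < birkhoff_max g T (Suc n) x} x * g x \<partial>M)"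
proof -
  interpret finite_measure M by fact
  define F where "F = birkhoff_max g T (Suc n)"
  define P where "P = {x\<in>space M. 0 < F x}"
  have [measurable]: "T \<in> M \<rightarrow>\<^sub>M M" "g \<in> borel_measurable M" "F \<in> borel_measurable M"
    using assms(2,4) by (auto simp: F_def simp del: birkhoff_max.simps)
  have F_bound: "\<bar>F x\<bar> \<le> real (Suc n) * K" if "x \<in> space M" for x
    using birkhoff_max_le[where g=g and K=K and n="Suc n", OF assms(2,5) that]
      birkhoff_max_nonneg[of g T "Suc n" x]
    unfolding F_def by linarith
  have F_int: "integrable M F"
    using F_bound by (intro integrable_const_bound[where B="real (Suc n) * K"] AE_I2) auto
  have FT_int: "integrable M (\<lambda>x. F (T x))"
    using F_bound measurable_space[OF assms(2)]
    by (intro integrable_const_bound[where B="real (Suc n) * K"] AE_I2) auto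
  have "\<bar>indicator P x * g x\<bar> \<le> K" if "x \<in> space M" for x
    using assms(5)[OF that] by (auto simp: indicator_def abs_le_iff)
  then have g_int: "integrable M (\<lambda>x. indicator P x * g x)"
    by (intro integrable_const_bound[where B=K] AE_I2) (auto simp: P_def)
  have pointwise: "F x - F (T x) \<le> indicator P x * g x" if "x \<in> space M" for x
    using birkhoff_max_Suc_diff_le[of g T n x] that
    by (simp add: F_def P_def indicator_def del: birkhoff_max.simps split: if_splits)
  have "(\<integral>x. F (T x) \<partial>M) = integral\<^sup>L M F"
    using integral_funpow_eq[OF assms(2,3), of F 1] by simp
  then have "(\<integral>x. F x - F (T x) \<partial>M) = 0"
    using F_int FT_int by simp
  moreover have "(\<integral>x. F x - F (T x) \<partial>M) \<le> (\<integral>x. indicator P x * g x \<partial>M)"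
    using F_int FT_int g_int pointwise by (intro integral_mono) auto
  ultimately show ?thesis
    by (simp add: P_def F_def)
qed

lemma integral_nonneg_if_AE_birkhoff_sum_pos:
  assumes "finite_measure M" "T \<in> M \<rightarrow>\<^sub>M M" "distr M M T = M"
    and "g \<in> borel_measurable M" "\<And>x. x \<in> space M \<Longrightarrow> \<bar>g x\<bar> \<le> K"
    and "AE x in M. \<exists>n. 0 < birkhoff_sum g T n x"
  shows "0 \<le> integral\<^sup>L M g"
proof -
  interpret finite_measure M by fact
  define E where "E n = {x\<in>space M. 0 < birkhoff_max g T (Suc n) x}" for n
  have [measurable]: "T \<in> M \<rightarrow>\<^sub>M M" "g \<in> borel_measurable M"
    by fact+
  have "(\<lambda>n. \<integral>x. indicator (E n) x * g x \<partial>M) \<longlonglongrightarrow> integral\<^sup>L M g"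
  proof (rule integral_dominated_convergence[where w="\<lambda>_. K"])
    show "(\<lambda>x. indicator (E n) x * g x) \<in> borel_measurable M" for n
      unfolding E_def by measurable
    show "g \<in> borel_measurable M" "integrable M (\<lambda>_. K)"
      by simp_all
    have "norm (indicator (E n) x * g x) \<le> K" if "x \<in> space M" for n x
      using assms(5)[OF that] by (auto simp: indicator_def abs_le_iff)
    then show "AE x in M. norm (indicator (E n) x * g x) \<le> K" for n
      by (intro AE_I2)
    show "AE x in M. (\<lambda>n. indicator (E n) x * g x) \<longlonglongrightarrow> g x"
      using assms(6) AE_space
    proof eventually_elim
      case (elim x)
      then obtain k where "0 < birkhoff_sum g T k x"
        by blast
      then have "0 < birkhoff_max g T k x"
        using birkhoff_sum_le_birkhoff_max[of g T k x] by linarith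
      then have "x \<in> E n" if "k \<le> n" for n
        using that elim birkhoff_max_mono[of k "Suc n" g T x] by (simp add: E_def)
      then have "\<forall>\<^sub>F n in sequentially. indicator (E n) x * g x = g x"
        by (intro eventually_mono[OF eventually_ge_at_top[of k]]) simp
      then show ?case
        by (rule tendsto_eventually)
    qed
  qed
  moreover have "0 \<le> (\<integral>x. indicator (E n) x * g x \<partial>M)" for n
    unfolding E_def by (rule maximal_ergodic_lemma[OF assms(1-5)])
  ultimately show ?thesis
    using LIMSEQ_le_const by blast
qed

lemma bdd_above_range_iff_nat_bound:
  fixes f :: "'a \<Rightarrow> real"
  shows "bdd_above (range f) \<longleftrightarrow> (\<exists>m::nat. \<forall>n. f n \<le> real m)"
proof
  assume "bdd_above (range f)"
  then obtain B where "\<And>n. f n \<le> B"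
    by (auto simp: bdd_above_def)
  moreover obtain m :: nat where "B \<le> real m"
    using real_arch_simple by blast
  ultimately show "\<exists>m::nat. \<forall>n. f n \<le> real m"
    by (meson order_trans)
qed (auto intro: bdd_aboveI2)

lemma ergodic_AE_bdd_above_birkhoff_sum:
  assumes erg: "ergodic M T"
    and g: "g \<in> borel_measurable M" "\<And>x. x \<in> space M \<Longrightarrow> \<bar>g x\<bar> \<le> K"
    and neg: "integral\<^sup>L M g < 0"
  shows "AE x in M. bdd_above (range (\<lambda>n. birkhoff_sum g T n x))"
proof -
  have mtds: "mtds M T"
    using erg by (simp add: ergodic_def)
  then interpret prob_space M
    by (simp add: mtds_def)
  have T [measurable]: "T \<in> M \<rightarrow>\<^sub>M M"
    using mtds by (simp add: mtds_def)
  note [measurable] = g(1)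
  define D where "D = {x\<in>space M. bdd_above (range (\<lambda>n. birkhoff_sum g T n x))}"
  have "D = {x\<in>space M. \<exists>m::nat. \<forall>n. birkhoff_sum g T n x \<le> real m}"
    by (simp add: D_def bdd_above_range_iff_nat_bound)
  then have "D \<in> sets M"
    by simp
  moreover have "T x \<in> D \<longleftrightarrow> x \<in> D" if "x \<in> space M" for x
    using that measurable_space[OF T that] by (simp add: D_def bdd_above_birkhoff_sum_shift_iff)
  ultimately consider "AE x in M. x \<in> D" | "AE x in M. x \<notin> D"
    using ergodic_invariant_set_trivial[OF erg] by blast
  then show ?thesis
  proof cases
    case 1
    then show ?thesis
      by eventually_elim (simp add: D_def)
  next
    case 2
    then have "AE x in M. \<exists>n. 0 < birkhoff_sum g T n x"
      using AE_space by eventually_elim (auto simp: D_def bdd_above_def not_le dest: spec[of _ 0])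
    then have "0 \<le> integral\<^sup>L M g"
      using integral_nonneg_if_AE_birkhoff_sum_pos[OF _ T mtds_distr_eq[OF mtds] g]
      by (simp add: finite_measure_axioms)
    with neg show ?thesis
      by simp
  qed
qed

lemma LIMSEQ_div_of_nat_if_bdd_above:
  fixes s :: "nat \<Rightarrow> real"
  assumes "\<And>j. bdd_above (range (\<lambda>n. s n - real n * (c + 1 / real (Suc j))))"
    and "\<And>j. bdd_above (range (\<lambda>n. real n * (c - 1 / real (Suc j)) - s n))"
  shows "(\<lambda>n. s n / real n) \<longlonglongrightarrow> c"
proof (rule LIMSEQ_I)
  fix r :: real
  assume r: "0 < r"
  then obtain j :: nat where j: "1 / real (Suc j) < r / 2"
    using reals_Archimedean[of "r / 2"] by (auto simp: inverse_eq_divide)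
  obtain B1 B2 where B1: "\<And>n. s n - real n * (c + 1 / real (Suc j)) \<le> B1"
    and B2: "\<And>n. real n * (c - 1 / real (Suc j)) - s n \<le> B2"
    using assms[of j] by (auto simp: bdd_above_def)
  define B where "B = max B1 B2"
  have deviation: "\<bar>s n - real n * c\<bar> \<le> real n / real (Suc j) + B" for n
    using B1[of n] B2[of n] by (auto simp: B_def algebra_simps abs_le_iff)
  obtain N :: nat where N: "2 * B / r < real N"
    using reals_Archimedean2 by blast
  have "\<bar>s n / real n - c\<bar> < r" if "N < n" for n
  proof -
    have n: "0 < real n"
      using that by simp
    have "2 * B < r * real N"
      using N r by (simp add: pos_divide_less_eq mult.commute)
    also have "\<dots> < r * real n"
      using r that by simp
    finally have "B / real n < r / 2"
      using n by (simp add: field_simps)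
    have "\<bar>s n / real n - c\<bar> = \<bar>s n - real n * c\<bar> / real n"
      using n by (simp add: field_simps)
    also have "\<dots> \<le> (real n / real (Suc j) + B) / real n"
      using deviation[of n] n by (simp add: divide_right_mono)
    also have "\<dots> = 1 / real (Suc j) + B / real n"
      using n by (simp add: field_simps)
    also have "\<dots> < r"
      using j \<open>B / real n < r / 2\<close> by linarith
    finally show ?thesis .
  qed
  then show "\<exists>no. \<forall>n\<ge>no. norm (s n / real n - c) < r"
    by (auto intro!: exI[of _ "Suc N"])
qed

theorem birkhoff_ergodic_bounded:
  assumes erg: "ergodic M T"
    and g: "g \<in> borel_measurable M" "\<And>x. x \<in> space M \<Longrightarrow> \<bar>g x\<bar> \<le> K"
  shows "AE x in M. (\<lambda>n. birkhoff_sum g T n x / real n) \<longlonglongrightarrow> integral\<^sup>L M g"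
proof -
  interpret prob_space M
    using erg by (simp add: ergodic_def mtds_def)
  note [measurable] = g(1)
  define c where "c = integral\<^sup>L M g"
  have g_int: "integrable M g"
    using g by (intro integrable_const_bound[where B=K] AE_I2) auto
  \<comment> \<open>\<open>\<sigma> = 1\<close> and \<open>\<sigma> = -1\<close> bound the Birkhoff averages from above and from below.\<close>
  have bdd: "AE x in M. bdd_above (range (\<lambda>n. birkhoff_sum (\<lambda>x. \<sigma> * (g x - c) - d) T n x))"
    if "0 < d" "\<bar>\<sigma>\<bar> = 1" for \<sigma> d
  proof (rule ergodic_AE_bdd_above_birkhoff_sum[OF erg, where K="K + \<bar>c\<bar> + d"])
    show "(\<lambda>x. \<sigma> * (g x - c) - d) \<in> borel_measurable M"
      by measurable
    show "\<bar>\<sigma> * (g x - c) - d\<bar> \<le> K + \<bar>c\<bar> + d" if "x \<in> space M" for x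
    proof -
      have "\<bar>\<sigma> * (g x - c)\<bar> = \<bar>g x - c\<bar>"
        using \<open>\<bar>\<sigma>\<bar> = 1\<close> by (simp add: abs_mult)
      then show ?thesis
        using g(2)[OF that] \<open>0 < d\<close> by linarith
    qed
    show "integral\<^sup>L M (\<lambda>x. \<sigma> * (g x - c) - d) < 0"
      using g_int \<open>0 < d\<close> by (simp add: c_def prob_space)
  qed
  have "AE x in M. \<forall>j.
      bdd_above (range (\<lambda>n. birkhoff_sum (\<lambda>x. 1 * (g x - c) - 1 / real (Suc j)) T n x)) \<and>
      bdd_above (range (\<lambda>n. birkhoff_sum (\<lambda>x. - 1 * (g x - c) - 1 / real (Suc j)) T n x))"
    by (simp only: AE_all_countable AE_conj_iff) (intro allI conjI bdd; simp)
  then show ?thesis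
  proof eventually_elim
    case (elim x)
    have "(\<lambda>x. 1 * (g x - c) - e) = (\<lambda>x. g x - (c + e))"
      "(\<lambda>x. - 1 * (g x - c) - e) = (\<lambda>x. (c - e) - g x)" for e
      by auto
    then have "birkhoff_sum (\<lambda>x. 1 * (g x - c) - e) T n x = birkhoff_sum g T n x - real n * (c + e)"
      "birkhoff_sum (\<lambda>x. - 1 * (g x - c) - e) T n x = real n * (c - e) - birkhoff_sum g T n x"
      for n e
      by (simp_all only: birkhoff_sum_diff_const birkhoff_sum_const_diff)
    with elim show ?case
      unfolding c_def[symmetric] by (intro LIMSEQ_div_of_nat_if_bdd_above) simp_all
  qed
qed

lemma birkhoff_average_L1_tendsto:
  assumes erg: "ergodic M T"
    and g: "g \<in> borel_measurable M" "\<And>x. x \<in> space M \<Longrightarrow> \<bar>g x\<bar> \<le> K"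
  shows "(\<lambda>n. \<integral>x. \<bar>birkhoff_sum g T n x / real n - integral\<^sup>L M g\<bar> \<partial>M) \<longlonglongrightarrow> 0"
proof -
  interpret prob_space M
    using erg by (simp add: ergodic_def mtds_def)
  have T [measurable]: "T \<in> M \<rightarrow>\<^sub>M M"
    using erg by (simp add: ergodic_def mtds_def)
  note [measurable] = g(1)
  have "(\<lambda>n. \<integral>x. \<bar>birkhoff_sum g T n x / real n - integral\<^sup>L M g\<bar> \<partial>M) \<longlonglongrightarrow> (\<integral>x. 0 \<partial>M)"
  proof (rule integral_dominated_convergence[where w="\<lambda>_. K + \<bar>integral\<^sup>L M g\<bar>"])
    show "AE x in M. (\<lambda>n. \<bar>birkhoff_sum g T n x / real n - integral\<^sup>L M g\<bar>) \<longlonglongrightarrow> 0"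
      using birkhoff_ergodic_bounded[OF erg g] by (rule AE_mp) (auto intro!: AE_I2 tendsto_rabs_zero LIM_zero)
    have average_bound: "\<bar>birkhoff_sum g T n x / real n\<bar> \<le> K" if "x \<in> space M" for n x
    proof (cases "n = 0")
      case True
      then show ?thesis
        using g(2)[OF that] by simp
    next
      case False
      then show ?thesis
        using birkhoff_sum_abs_le[where n=n, OF T g(2) that] by (simp add: divide_le_eq mult.commute)
    qed
    have "norm \<bar>birkhoff_sum g T n x / real n - integral\<^sup>L M g\<bar> \<le> K + \<bar>integral\<^sup>L M g\<bar>"
      if "x \<in> space M" for n x
      unfolding real_norm_def abs_abs
      using average_bound[OF that, of n] abs_triangle_ineq4[of "birkhoff_sum g T n x / real n" "integral\<^sup>L M g"]
      by linarith
    then show "AE x in M. norm \<bar>birkhoff_sum g T n x / real n - integral\<^sup>L M g\<bar> \<le> K + \<bar>integral\<^sup>L M g\<bar>" for n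
      by (intro AE_I2)
  qed simp_all
  then show ?thesis
    by simp
qed

lemma integral_indicator_mult_ge:
  assumes "finite_measure M" "A \<in> sets M"
    and f: "f \<in> borel_measurable M" "\<And>x. x \<in> space M \<Longrightarrow> \<bar>f x\<bar> \<le> K"
  shows "measure M A * c - (\<integral>x. \<bar>f x - c\<bar> \<partial>M) \<le> (\<integral>x. indicator A x * f x \<partial>M)"
proof -
  interpret finite_measure M by fact
  have "\<bar>f x - c\<bar> \<le> K + \<bar>c\<bar>" if "x \<in> space M" for x
    using f(2)[OF that] abs_triangle_ineq4[of "f x" c] by linarith
  then have "integrable M (\<lambda>x. \<bar>f x - c\<bar>)"
    using f by (intro integrable_const_bound[where B="K + \<bar>c\<bar>"] AE_I2) auto
  moreover have "\<bar>indicator A x * f x\<bar> \<le> K" if "x \<in> space M" for x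
    using f(2)[OF that] by (auto simp: indicator_def abs_le_iff)
  then have "integrable M (\<lambda>x. indicator A x * f x)"
    using assms(2) f by (intro integrable_const_bound[where B=K] AE_I2) auto
  moreover have "integrable M (\<lambda>x. indicator A x * c)"
    using assms(2) by (intro integrable_mult_left) (simp add: emeasure_eq_measure)
  ultimately have "(\<integral>x. indicator A x * c - \<bar>f x - c\<bar> \<partial>M) \<le> (\<integral>x. indicator A x * f x \<partial>M)"
    by (intro integral_mono) (auto simp: indicator_def abs_le_iff)
  moreover have "(\<integral>x. indicator A x * c - \<bar>f x - c\<bar> \<partial>M) = measure M A * c - (\<integral>x. \<bar>f x - c\<bar> \<partial>M)"
    using \<open>integrable M (\<lambda>x. \<bar>f x - c\<bar>)\<close> \<open>integrable M (\<lambda>x. indicator A x * c)\<close> assms(2)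
    by simp
  ultimately show ?thesis
    by simp
qed

lemma sum_measure_Int_preimage_funpow:
  assumes "finite_measure M" "T \<in> M \<rightarrow>\<^sub>M M" "A \<in> sets M" "B \<in> sets M"
  shows "(\<Sum>i<N. measure M (A \<inter> ((T ^^ (j + i)) -` B \<inter> space M)))
    = (\<integral>x. indicator A x * birkhoff_sum (indicator B) T N ((T ^^ j) x) \<partial>M)"
proof -
  interpret finite_measure M by fact
  have [measurable]: "T ^^ k \<in> M \<rightarrow>\<^sub>M M" for k
    using measurable_funpow[OF assms(2)] .
  have "measure M (A \<inter> ((T ^^ k) -` B \<inter> space M)) = (\<integral>x. indicator A x * indicator B ((T ^^ k) x) \<partial>M)"
    for k
  proof -
    have "measure M (A \<inter> ((T ^^ k) -` B \<inter> space M)) = (\<integral>x. indicator (A \<inter> ((T ^^ k) -` B \<inter> space M)) x \<partial>M)"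
      using assms(3,4) by simp
    also have "\<dots> = (\<integral>x. indicator A x * indicator B ((T ^^ k) x) \<partial>M)"
      by (intro Bochner_Integration.integral_cong) (auto simp: indicator_def)
    finally show ?thesis .
  qed
  moreover have "integrable M (\<lambda>x. indicator A x * indicator B ((T ^^ k) x) :: real)" for k
    using assms(3,4) by (intro integrable_const_bound[where B=1] AE_I2) (auto simp: indicator_def)
  ultimately have "(\<Sum>i<N. measure M (A \<inter> ((T ^^ (j + i)) -` B \<inter> space M)))
      = (\<integral>x. (\<Sum>i<N. indicator A x * indicator B ((T ^^ (j + i)) x)) \<partial>M)"
    by (simp only: Bochner_Integration.integral_sum)
  also have "\<dots> = (\<integral>x. indicator A x * birkhoff_sum (indicator B) T N ((T ^^ j) x) \<partial>M)"
  proof (intro Bochner_Integration.integral_cong refl)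
    fix x
    have "(T ^^ (j + i)) x = (T ^^ i) ((T ^^ j) x)" for i
      by (simp add: funpow_add add.commute)
    then show "(\<Sum>i<N. indicator A x * indicator B ((T ^^ (j + i)) x))
        = indicator A x * birkhoff_sum (indicator B) T N ((T ^^ j) x)"
      by (simp only: birkhoff_sum_def sum_distrib_left)
  qed
  finally show ?thesis .
qed

lemma sum_measure_Int_preimage_funpow_ge:
  assumes "finite_measure M" "T \<in> M \<rightarrow>\<^sub>M M" "distr M M T = M" "A \<in> sets M" "B \<in> sets M" "0 < N"
  shows "real N * (measure M A * measure M B
      - (\<integral>x. \<bar>birkhoff_sum (indicator B) T N x / real N - measure M B\<bar> \<partial>M))
    \<le> (\<Sum>i<N. measure M (A \<inter> ((T ^^ (j + i)) -` B \<inter> space M)))"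
proof -
  interpret finite_measure M by fact
  have T [measurable]: "T \<in> M \<rightarrow>\<^sub>M M" "T ^^ j \<in> M \<rightarrow>\<^sub>M M"
    using assms(2) measurable_funpow by blast+
  note [measurable] = assms(4,5)
  define h where "h x = birkhoff_sum (indicator B) T N x / real N" for x
  have [measurable]: "h \<in> borel_measurable M"
    unfolding h_def by measurable
  have "\<bar>h x\<bar> \<le> 1" for x
  proof -
    have "\<bar>birkhoff_sum (indicator B) T N x\<bar> \<le> real N * 1"
      by (rule birkhoff_sum_abs_le[where M="count_space UNIV"]) auto
    then show ?thesis
      using assms(6) by (simp add: h_def divide_le_eq)
  qed
  then have "measure M A * measure M B - (\<integral>x. \<bar>h ((T ^^ j) x) - measure M B\<bar> \<partial>M)
      \<le> (\<integral>x. indicator A x * h ((T ^^ j) x) \<partial>M)"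
    by (intro integral_indicator_mult_ge[where K=1] finite_measure_axioms assms(4)) simp_all
  moreover have "(\<integral>x. \<bar>h ((T ^^ j) x) - measure M B\<bar> \<partial>M) = (\<integral>x. \<bar>h x - measure M B\<bar> \<partial>M)"
    by (rule integral_funpow_eq[OF assms(2,3)]) measurable
  moreover have "(\<Sum>i<N. measure M (A \<inter> ((T ^^ (j + i)) -` B \<inter> space M)))
      = real N * (\<integral>x. indicator A x * h ((T ^^ j) x) \<partial>M)"
    unfolding sum_measure_Int_preimage_funpow[OF assms(1,2,4,5)]
    using assms(6) by (simp add: h_def)
  ultimately have "real N * (measure M A * measure M B - (\<integral>x. \<bar>h x - measure M B\<bar> \<partial>M))
      \<le> (\<Sum>i<N. measure M (A \<inter> ((T ^^ (j + i)) -` B \<inter> space M)))"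
    using assms(6) by (simp add: mult_le_cancel_left_pos)
  then show ?thesis
    by (simp add: h_def)
qed

lemma rel_dense_nat_if_window_sums_gt:
  fixes P :: "nat \<Rightarrow> real"
  assumes "0 < N" "\<And>j. 1 \<le> j \<Longrightarrow> real N * t < (\<Sum>i<N. P (j + i))"
  shows "rel_dense_nat {k. 1 \<le> k \<and> t < P k}"
  unfolding rel_dense_nat_def
proof (intro exI conjI allI impI)
  show "1 \<le> N"
    using assms(1) by simp
  fix j :: nat
  assume "1 \<le> j"
  have "\<exists>i<N. t < P (j + i)"
  proof (rule ccontr)
    assume "\<not> ?thesis"
    then have "P (j + i) \<le> t" if "i \<in> {..<N}" for i
      using that by (metis lessThan_iff not_less)
    then have "(\<Sum>i<N. P (j + i)) \<le> real (card {..<N}) * t"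
      by (rule sum_bounded_above)
    with assms(2)[OF \<open>1 \<le> j\<close>] show False
      by simp
  qed
  then obtain i where "i < N" "t < P (j + i)"
    by blast
  with \<open>1 \<le> j\<close> have "j + i \<in> {k. 1 \<le> k \<and> t < P k} \<inter> {j..j + N - 1}"
    by auto
  then show "{k. 1 \<le> k \<and> t < P k} \<inter> {j..j + N - 1} \<noteq> {}"
    by blast
qed

theorem corollary5p1:
  fixes M :: "'a measure" and T :: "'a \<Rightarrow> 'a" and A B :: "'a set" and \<epsilon> :: real
  assumes "ergodic M T"
    and "A \<in> sets M" and "B \<in> sets M"
    and "\<epsilon> > 0"
  shows "rel_dense_nat {k::nat. k \<ge> 1 \<and>
           measure M (A \<inter> ((T ^^ k) -` B \<inter> space M)) > measure M A * measure M B - \<epsilon>}"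
proof -
  have mtds: "mtds M T"
    using assms(1) by (simp add: ergodic_def)
  then interpret prob_space M
    by (simp add: mtds_def)
  have T: "T \<in> M \<rightarrow>\<^sub>M M"
    using mtds by (simp add: mtds_def)
  let ?L1_error = "\<lambda>n. \<integral>x. \<bar>birkhoff_sum (indicator B) T n x / real n - measure M B\<bar> \<partial>M"
  have "?L1_error \<longlonglongrightarrow> 0"
    using birkhoff_average_L1_tendsto[OF assms(1), where g="indicator B" and K=1] assms(3) by simp
  then obtain n0 where n0: "\<And>n. n0 \<le> n \<Longrightarrow> ?L1_error n < \<epsilon>"
    using assms(4) by (auto simp: LIMSEQ_iff)
  define N where "N = Suc n0"
  have "real N * (measure M A * measure M B - \<epsilon>)
      < (\<Sum>i<N. measure M (A \<inter> ((T ^^ (j + i)) -` B \<inter> space M)))" for j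
  proof -
    have "real N * (measure M A * measure M B - \<epsilon>)
        < real N * (measure M A * measure M B - ?L1_error N)"
      using n0[of N] by (simp add: N_def)
    also have "\<dots> \<le> (\<Sum>i<N. measure M (A \<inter> ((T ^^ (j + i)) -` B \<inter> space M)))"
      by (rule sum_measure_Int_preimage_funpow_ge[OF finite_measure_axioms T mtds_distr_eq[OF mtds] assms(2,3)])
        (simp add: N_def)
    finally show ?thesis .
  qed
  then show ?thesis
    by (intro rel_dense_nat_if_window_sums_gt[where N=N]) (simp_all add: N_def)
qed

end
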